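(* Let $\alpha>1/3$, $\beta>0$ and $\varepsilon>0$. There exist almost surely finite random times $N_1,N_2$ (depending on $\varepsilon$) such that: (i) for all $j\in\mathbb{Z}$ and all $k\ge N_1$: if $X_k=j$ and $\Delta_k(j)/k\ge\varepsilon$ then $X_{k+1}=j+1$; if $X_k=j$ and $\Delta_k(j)/k\le-\varepsilon$ then $X_{k+1}=j-1$; (ii) for all $k\ge N_2$ and all $j\in\mathbb{Z}$: if $X_k<j$ then $\Delta_k(j)/k<3\varepsilon/2$, and if $X_k>j$ then $\Delta_k(j)/k>-3\varepsilon/2$.
   Context: Let $\alpha\in\mathbb{R}$ and $\beta>0$. Let $(X_k)_{k\ge0}$ be the nearest-neighbour random walk on $\mathbb{Z}$ with $X_0=0$ defined as follows. For $k\ge0$ and $j\in\mathbb{Z}$, let $l_k(j):=\#\{m\in\{1,\dots,k\}:\{X_{m-1},X_m\}=\{j-1,j\}\}$, let $\mathcal{F}_k=\sigma(X_0,\dots,X_k)$, and let $\Delta_k(j):=-\alpha l_k(j-1)+l_k(j)-l_k(j+1)+\alpha l_k(j+2)$. The transition probabilities are $\mathbb{P}(X_{k+1}=X_k\pm1\mid\mathcal{F}_k)=\dfrac{e^{\pm\beta\Delta_k(X_k)}}{e^{\beta\Delta_k(X_k)}+e^{-\beta\Delta_k(X_k)}}$. *)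

theory Defs
  imports "HOL-Probability.Probability"
begin

text \<open>Paths are functions p :: nat => int (p m = X_m).
  Local time of the edge {j-1, j} up to time k.\<close>
definition loc_time :: "(nat \<Rightarrow> int) \<Rightarrow> nat \<Rightarrow> int \<Rightarrow> nat" where
  "loc_time p k j = card {m \<in> {1..k}. {p (m - 1), p m} = {j - 1, j}}"

definition Delta :: "real \<Rightarrow> (nat \<Rightarrow> int) \<Rightarrow> nat \<Rightarrow> int \<Rightarrow> real" where
  "Delta \<alpha> p k j = - \<alpha> * real (loc_time p k (j - 1)) + real (loc_time p k j)
     - real (loc_time p k (j + 1)) + \<alpha> * real (loc_time p k (j + 2))"

definition step_prob :: "real \<Rightarrow> real \<Rightarrow> (nat \<Rightarrow> int) \<Rightarrow> nat \<Rightarrow> real" where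
  "step_prob \<alpha> \<beta> p k =
     (let d = Delta \<alpha> p k (p k) in
      if p (Suc k) = p k + 1 then exp (\<beta> * d) / (exp (\<beta> * d) + exp (- \<beta> * d))
      else if p (Suc k) = p k - 1 then exp (- \<beta> * d) / (exp (\<beta> * d) + exp (- \<beta> * d))
      else 0)"

definition path_prob :: "real \<Rightarrow> real \<Rightarrow> (nat \<Rightarrow> int) \<Rightarrow> nat \<Rightarrow> real" where
  "path_prob \<alpha> \<beta> p n = (if p 0 = 0 then (\<Prod>k<n. step_prob \<alpha> \<beta> p k) else 0)"

text \<open>X is the walk on the probability space M: its finite-dimensional laws are those
  determined by the transition probabilities (this characterises the law of the process).\<close>
definition is_walk :: "'w measure \<Rightarrow> real \<Rightarrow> real \<Rightarrow> (nat \<Rightarrow> 'w \<Rightarrow> int) \<Rightarrow> bool" where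
  "is_walk M \<alpha> \<beta> X \<longleftrightarrow> prob_space M \<and>
     (\<forall>i. X i \<in> measurable M (count_space UNIV)) \<and>
     (\<forall>p n. measure M {\<omega> \<in> space M. \<forall>i\<le>n. X i \<omega> = p i} = path_prob \<alpha> \<beta> p n)"

end

theory Submission
  imports Defs
begin

text \<open>
  Given the history up to time n, the walk steps against the sign of d = Delta_n(X_n) with
  probability exp(-beta |d|) / (exp(beta d) + exp(-beta d)) <= exp(-2 beta |d|), which is at most
  exp(-2 beta eps n) when |d| >= eps n. Summing over all histories and applying Borel-Cantelli,
  almost surely the walk eventually always follows the drift; this is (i).

  For (ii) take a site j to the right of the walk. A step changes Delta(j) only through the local
  time of the crossed edge, and since alpha >= 0 it can increase Delta(j) only if that edge is
  {j-1, j} or {j+1, j+2}. The latter lies beyond the walk, and crossing the former downwards from j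
  is forbidden by the drift unless Delta_k(j) < eps k. By induction Delta_k(j) <= eps k + O(N) once
  the walk obeys the drift after time N, which gives (ii) for large k; sites to the left of the
  walk are handled by reflecting the path.
\<close>

lemma loc_time_le: "loc_time p k j \<le> k"
proof -
  have "loc_time p k j \<le> card {1..k}"
    unfolding loc_time_def by (rule card_mono) auto
  then show ?thesis by simp
qed

lemma loc_time_0 [simp]: "loc_time p 0 j = 0"
  by (simp add: loc_time_def)

lemma Delta_0 [simp]: "Delta a p 0 j = 0"
  by (simp add: Delta_def)

lemma abs_Delta_le:
  assumes "a \<ge> 0"
  shows "\<bar>Delta a p k j\<bar> \<le> (2 + 2 * a) * k"
proof -
  have L: "real (loc_time p k i) \<le> k" for i
    using loc_time_le by simp
  have aL: "a * loc_time p k i \<le> a * k" "a * loc_time p k i \<ge> 0" for i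
    using L assms by (simp_all add: mult_left_mono)
  have "(2 + 2 * a) * k = 2 * k + 2 * (a * k)"
    by (simp add: algebra_simps)
  with L[of j] L[of "j + 1"] aL[of "j - 1"] aL[of "j + 2"] show ?thesis
    unfolding Delta_def abs_le_iff by linarith
qed

lemma loc_time_cong:
  assumes "\<forall>i\<le>k. p i = q i"
  shows "loc_time p k j = loc_time q k j"
proof -
  have "{m \<in> {1..k}. {p (m - 1), p m} = {j - 1, j}} = {m \<in> {1..k}. {q (m - 1), q m} = {j - 1, j}}"
    using assms by auto
  then show ?thesis
    by (simp add: loc_time_def)
qed

lemma Delta_cong:
  assumes "\<forall>i\<le>k. p i = q i"
  shows "Delta a p k j = Delta a q k j"
  using loc_time_cong[OF assms] by (simp add: Delta_def)

lemma loc_time_Suc: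
  assumes "p (Suc k) = p k + 1 \<or> p (Suc k) = p k - 1"
  shows "loc_time p (Suc k) j = loc_time p k j + of_bool (j = max (p k) (p (Suc k)))"
proof -
  have split: "{m \<in> {1..Suc k}. P m} = (if P (Suc k) then insert (Suc k) else id) {m \<in> {1..k}. P m}"
    for P by (auto simp: le_Suc_eq)
  have "{x, y} = {j - 1, j} \<longleftrightarrow> j = max x y" if "y = x + 1 \<or> y = x - 1" for x y :: int
    using that by (elim disjE) (auto simp: doubleton_eq_iff)
  with assms show ?thesis
    unfolding loc_time_def split by simp
qed

lemma Delta_Suc_le:
  assumes "p (Suc k) = p k + 1 \<or> p (Suc k) = p k - 1" and "a \<ge> 0"
  defines "e \<equiv> max (p k) (p (Suc k))"
  shows "Delta a p (Suc k) j \<le> Delta a p k j + of_bool (j = e) + a * of_bool (j + 2 = e)"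
  using assms by (simp add: Delta_def loc_time_Suc[OF assms(1)] algebra_simps)

lemma loc_time_reflect: "loc_time (\<lambda>i. - p i) k j = loc_time p k (1 - j)"
proof -
  have "{- p (m - 1), - p m} = {j - 1, j} \<longleftrightarrow> {p (m - 1), p m} = {1 - j - 1, 1 - j}" for m
    by (auto simp: doubleton_eq_iff)
  then show ?thesis
    by (simp add: loc_time_def)
qed

lemma Delta_reflect: "Delta a (\<lambda>i. - p i) k j = - Delta a p k (- j)"
proof -
  have args: "1 - (j - 1) = - j + 2" "1 - j = - j + 1" "1 - (j + 1) = - j" "1 - (j + 2) = - j - 1"
    by simp_all
  show ?thesis
    unfolding Delta_def loc_time_reflect args by (simp add: algebra_simps)
qed

definition obeys_drift :: "real \<Rightarrow> real \<Rightarrow> (nat \<Rightarrow> int) \<Rightarrow> nat \<Rightarrow> bool" where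
  "obeys_drift a eps p n \<longleftrightarrow>
     (eps \<le> Delta a p n (p n) / n \<longrightarrow> p (Suc n) = p n + 1) \<and>
     (Delta a p n (p n) / n \<le> - eps \<longrightarrow> p (Suc n) = p n - 1) \<and>
     (p (Suc n) = p n + 1 \<or> p (Suc n) = p n - 1)"

lemma obeys_drift_reflect: "obeys_drift a eps (\<lambda>i. - p i) n \<longleftrightarrow> obeys_drift a eps p n"
  by (auto simp: obeys_drift_def Delta_reflect)

lemma Delta_le_of_not_ge:
  assumes "\<not> eps \<le> Delta a p k j / k"
  shows "Delta a p k j \<le> eps * k"
proof (cases "k = 0")
  case False
  then have "Delta a p k j < eps * k"
    using assms by (simp add: not_le pos_divide_less_eq)
  then show ?thesis
    by simp
qed simp

lemma Delta_right_of_walk_le: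
  assumes "a \<ge> 0" and "eps \<ge> 0" and obeys: "\<forall>n\<ge>N. obeys_drift a eps p n" and "p k < j"
  shows "Delta a p k j \<le> eps * k + (2 + 2 * a) * N + 1"
  using \<open>p k < j\<close>
proof (induction k arbitrary: j)
  case 0
  then show ?case
    using \<open>a \<ge> 0\<close> by simp
next
  case (Suc k)
  show ?case
  proof (cases "k < N")
    case True
    then have "(2 + 2 * a) * Suc k \<le> (2 + 2 * a) * N"
      using \<open>a \<ge> 0\<close> by (intro mult_left_mono) auto
    moreover have "eps * Suc k \<ge> 0"
      using \<open>eps \<ge> 0\<close> by simp
    ultimately show ?thesis
      using abs_Delta_le[OF \<open>a \<ge> 0\<close>, of p "Suc k" j] by linarith
  next
    case False
    then have step: "obeys_drift a eps p k"
      using obeys by simp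
    define e where "e = max (p k) (p (Suc k))"
    have nn: "p (Suc k) = p k + 1 \<or> p (Suc k) = p k - 1"
      using step by (simp add: obeys_drift_def)
    have "j + 2 \<noteq> e"
      using nn Suc.prems by (auto simp: e_def)
    then have incr: "Delta a p (Suc k) j \<le> Delta a p k j + of_bool (j = e)"
      using Delta_Suc_le[OF nn \<open>a \<ge> 0\<close>, of j] by (simp add: e_def)
    have grow: "eps * k \<le> eps * Suc k"
      using \<open>eps \<ge> 0\<close> by (simp add: mult_left_mono)
    show ?thesis
    proof (cases "j = e")
      case True
      then have "j = p k" "p (Suc k) = p k - 1"
        using nn Suc.prems by (auto simp: e_def)
      then have "\<not> eps \<le> Delta a p k j / k"
        using step by (auto simp: obeys_drift_def)
      then have "Delta a p k j \<le> eps * k"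
        by (rule Delta_le_of_not_ge)
      moreover have "(2 + 2 * a) * N \<ge> 0"
        using \<open>a \<ge> 0\<close> by simp
      ultimately show ?thesis
        using incr True grow by simp
    next
      case False
      then have "p k < j"
        using nn Suc.prems by (auto simp: e_def)
      then have "Delta a p k j \<le> eps * k + (2 + 2 * a) * N + 1"
        by (rule Suc.IH)
      with incr False grow show ?thesis
        by simp
    qed
  qed
qed

lemma Delta_left_of_walk_ge:
  assumes "a \<ge> 0" and "eps \<ge> 0" and obeys: "\<forall>n\<ge>N. obeys_drift a eps p n" and "j < p k"
  shows "- (eps * k + (2 + 2 * a) * N + 1) \<le> Delta a p k j"
proof -
  have "\<forall>n\<ge>N. obeys_drift a eps (\<lambda>i. - p i) n"
    using obeys by (simp add: obeys_drift_reflect)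
  with assms(1,2) have "Delta a (\<lambda>i. - p i) k (- j) \<le> eps * k + (2 + 2 * a) * N + 1"
    using \<open>j < p k\<close> by (intro Delta_right_of_walk_le) auto
  then show ?thesis
    by (simp add: Delta_reflect)
qed

lemma drift_bounds_of_obeys_drift:
  assumes "a \<ge> 0" and "eps > 0" and obeys: "\<forall>n\<ge>N. obeys_drift a eps p n"
  shows "(\<exists>N1::nat. \<forall>k\<ge>N1. \<forall>j::int. p k = j \<longrightarrow>
        (Delta a p k j / real k \<ge> eps \<longrightarrow> p (Suc k) = j + 1) \<and>
        (Delta a p k j / real k \<le> - eps \<longrightarrow> p (Suc k) = j - 1)) \<and>
    (\<exists>N2::nat. \<forall>k\<ge>N2. \<forall>j::int.
        (p k < j \<longrightarrow> Delta a p k j / real k < 3 * eps / 2) \<and>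
        (p k > j \<longrightarrow> Delta a p k j / real k > - (3 * eps / 2)))"
proof (intro conjI)
  show "\<exists>N1::nat. \<forall>k\<ge>N1. \<forall>j::int. p k = j \<longrightarrow>
        (Delta a p k j / real k \<ge> eps \<longrightarrow> p (Suc k) = j + 1) \<and>
        (Delta a p k j / real k \<le> - eps \<longrightarrow> p (Suc k) = j - 1)"
    using obeys by (auto simp: obeys_drift_def)
  define C where "C = (2 + 2 * a) * N + 1"
  have "(2 + 2 * a) * N \<ge> 0"
    using \<open>a \<ge> 0\<close> by simp
  then have "C > 0"
    by (simp add: C_def)
  obtain N2 :: nat where N2: "2 * C / eps < N2"
    using reals_Archimedean2 by blast
  show "\<exists>N2::nat. \<forall>k\<ge>N2. \<forall>j::int.
        (p k < j \<longrightarrow> Delta a p k j / real k < 3 * eps / 2) \<and>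
        (p k > j \<longrightarrow> Delta a p k j / real k > - (3 * eps / 2))"
  proof (intro exI allI impI conjI)
    fix k :: nat and j :: int
    assume "N2 \<le> k"
    with N2 have "2 * C / eps < k"
      by linarith
    then have big: "2 * C < eps * k"
      using \<open>eps > 0\<close> by (simp add: pos_divide_less_eq mult.commute)
    then have "k > 0"
      using \<open>C > 0\<close> by (cases "k = 0") auto
    have three_halves: "3 * eps / 2 * k = 3 / 2 * (eps * k)"
      by simp
    show "Delta a p k j / real k < 3 * eps / 2" if "p k < j"
    proof -
      have "Delta a p k j \<le> eps * k + C"
        using Delta_right_of_walk_le[OF \<open>a \<ge> 0\<close> _ obeys that] \<open>eps > 0\<close> by (simp add: C_def)
      with big have "Delta a p k j < 3 * eps / 2 * k"
        unfolding three_halves by linarith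
      with \<open>k > 0\<close> show ?thesis
        by (simp add: pos_divide_less_eq)
    qed
    show "Delta a p k j / real k > - (3 * eps / 2)" if "p k > j"
    proof -
      have "- (eps * k + C) \<le> Delta a p k j"
        using Delta_left_of_walk_ge[OF \<open>a \<ge> 0\<close> _ obeys that] \<open>eps > 0\<close> by (simp add: C_def)
      with big have "- (3 * eps / 2) * k < Delta a p k j"
        using three_halves by linarith
      with \<open>k > 0\<close> show ?thesis
        by (simp add: pos_less_divide_eq)
    qed
  qed
qed

lemma mult_le_of_le_divide:
  fixes d eps :: real and n :: nat
  assumes "0 < eps" and "eps \<le> d / n"
  shows "eps * n \<le> d"
proof -
  have "n > 0"
    using assms by (cases "n = 0") auto
  with assms(2) show ?thesis
    by (simp add: pos_le_divide_eq)
qed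

lemma (in prob_space) prob_le_of_partition:
  assumes "countable I" and "disjoint_family_on H I" and "\<And>i. i \<in> I \<Longrightarrow> H i \<in> events"
    and "A \<in> events" and "A \<subseteq> (\<Union>i\<in>I. H i)" and "c \<ge> 0"
    and "\<And>i. i \<in> I \<Longrightarrow> prob (A \<inter> H i) \<le> c * prob (H i)"
  shows "prob A \<le> c"
proof -
  have disj_A: "disjoint_family_on (\<lambda>i. A \<inter> H i) I"
    using assms(2) by (auto simp: disjoint_family_on_def)
  have "A = (\<Union>i\<in>I. A \<inter> H i)"
    using assms(5) by blast
  then have "emeasure M A = emeasure M (\<Union>i\<in>I. A \<inter> H i)"
    by simp
  also have "\<dots> = (\<integral>\<^sup>+i. emeasure M (A \<inter> H i) \<partial>count_space I)"
    using assms(1,3,4) disj_A by (intro emeasure_UN_countable) auto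
  also have "\<dots> \<le> (\<integral>\<^sup>+i. ennreal c * emeasure M (H i) \<partial>count_space I)"
    using assms(7) \<open>c \<ge> 0\<close>
    by (intro nn_integral_mono) (simp add: emeasure_eq_measure ennreal_mult[symmetric] ennreal_leI)
  also have "\<dots> = ennreal c * emeasure M (\<Union>i\<in>I. H i)"
    using assms(1-3) by (simp add: nn_integral_cmult emeasure_UN_countable)
  also have "\<dots> \<le> ennreal c * 1"
    by (intro mult_left_mono) (auto simp: emeasure_eq_measure)
  finally show ?thesis
    using \<open>c \<ge> 0\<close> by (simp add: emeasure_eq_measure)
qed

lemma exp_ratio_compl:
  fixes x :: real
  shows "1 - exp x / (exp x + exp (- x)) = exp (- x) / (exp x + exp (- x))"
proof -
  have "exp x + exp (- x) > 0"
    by (simp add: add_pos_pos)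
  then show ?thesis
    by (simp add: field_simps)
qed

lemma one_minus_exp_ratio_le:
  fixes x :: real
  shows "1 - exp x / (exp x + exp (- x)) \<le> exp (- 2 * x)"
proof -
  have "exp (- x) / (exp x + exp (- x)) \<le> exp (- x) / exp x"
    by (rule divide_left_mono) (simp_all add: add_pos_pos)
  also have "\<dots> = exp (- 2 * x)"
    by (simp add: exp_diff[symmetric])
  finally show ?thesis
    by (simp add: exp_ratio_compl)
qed

lemma step_prob_cong:
  assumes "\<forall>i\<le>Suc k. p i = q i"
  shows "step_prob a b p k = step_prob a b q k"
proof -
  have pk: "p k = q k" and pSk: "p (Suc k) = q (Suc k)"
    using assms by auto
  have "Delta a p k (p k) = Delta a q k (q k)"
    using assms pk by (auto intro: Delta_cong)
  then show ?thesis
    unfolding step_prob_def Let_def pk pSk by simp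
qed

lemma obeys_drift_cong:
  assumes "\<forall>i\<le>Suc k. p i = q i"
  shows "obeys_drift a eps p k \<longleftrightarrow> obeys_drift a eps q k"
  using assms Delta_cong[of k p q a "p k"] by (simp add: obeys_drift_def)

lemma path_prob_snoc:
  assumes "length l = Suc n"
  shows "path_prob a b (nth (l @ [v])) (Suc n) = path_prob a b (nth l) n * step_prob a b (nth (l @ [v])) n"
proof -
  have "step_prob a b (nth (l @ [v])) k = step_prob a b (nth l) k" if "k < n" for k
    using that assms by (intro step_prob_cong) (auto simp: nth_append)
  then show ?thesis
    using assms by (simp add: path_prob_def nth_append)
qed

lemma step_prob_snoc:
  fixes a b :: real
  assumes "length l = Suc n" and "s = 1 \<or> s = - 1"
  defines "y \<equiv> real_of_int s * b * Delta a (nth l) n (l ! n)"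
  shows "step_prob a b (nth (l @ [l ! n + s])) n = exp y / (exp y + exp (- y))"
proof -
  have "Delta a (nth (l @ [v])) n (l ! n) = Delta a (nth l) n (l ! n)" for v
    using assms(1) by (intro Delta_cong) (auto simp: nth_append)
  then show ?thesis
    using assms by (auto simp: step_prob_def nth_append Let_def)
qed

lemma obeys_drift_snoc:
  fixes a eps :: real
  assumes "length l = Suc n"
  defines "x \<equiv> l ! n" and "d \<equiv> Delta a (nth l) n (l ! n)"
  shows "obeys_drift a eps (nth (l @ [v])) n \<longleftrightarrow>
    (eps \<le> d / n \<longrightarrow> v = x + 1) \<and> (d / n \<le> - eps \<longrightarrow> v = x - 1) \<and> (v = x + 1 \<or> v = x - 1)"
proof -
  have "Delta a (nth (l @ [v])) n (l ! n) = d"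
    using assms(1) unfolding d_def by (intro Delta_cong) (auto simp: nth_append)
  then show ?thesis
    using assms(1) by (simp add: obeys_drift_def nth_append x_def)
qed

lemma map_upt_eq_iff: "map f [0..<m] = l \<longleftrightarrow> length l = m \<and> (\<forall>i<m. f i = l ! i)"
  by (auto simp: list_eq_iff_nth_eq simp del: upt_Suc)

definition history :: "'w measure \<Rightarrow> (nat \<Rightarrow> 'w \<Rightarrow> int) \<Rightarrow> int list \<Rightarrow> 'w set" where
  "history M X l = {\<omega> \<in> space M. map (\<lambda>i. X i \<omega>) [0..<length l] = l}"

lemma history_eq_nth: "history M X l = {\<omega> \<in> space M. \<forall>i<length l. X i \<omega> = l ! i}"
  unfolding history_def map_upt_eq_iff by simp

lemma history_in_space: "\<omega> \<in> history M X l \<Longrightarrow> \<omega> \<in> space M"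
  by (simp add: history_def)

lemma history_snoc:
  "history M X (l @ [v]) = history M X l \<inter> {\<omega> \<in> space M. X (length l) \<omega> = v}"
  by (auto simp: history_eq_nth nth_append less_Suc_eq)

lemma history_disjoint: "disjoint_family_on (history M X) {l. length l = m}"
  by (auto simp: disjoint_family_on_def history_def)

lemma history_cover: "space M \<subseteq> (\<Union>l\<in>{l. length l = m}. history M X l)"
  by (auto simp: history_def)

definition drift_violation :: "'w measure \<Rightarrow> (nat \<Rightarrow> 'w \<Rightarrow> int) \<Rightarrow> real \<Rightarrow> real \<Rightarrow> nat \<Rightarrow> 'w set" where
  "drift_violation M X a eps n = {\<omega> \<in> space M. \<not> obeys_drift a eps (\<lambda>i. X i \<omega>) n}"

context
  fixes M :: "'w measure" and X :: "nat \<Rightarrow> 'w \<Rightarrow> int" and a b :: real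
  assumes walk: "is_walk M a b X"
begin

interpretation prob_space M
  using walk by (simp add: is_walk_def)

lemma measurable_walk [measurable]: "X i \<in> measurable M (count_space UNIV)"
  using walk by (simp add: is_walk_def)

lemma history_in_events: "history M X l \<in> events"
  unfolding history_eq_nth by measurable

lemma measurable_walk_prefix: "(\<lambda>\<omega>. map (\<lambda>i. X i \<omega>) [0..<m]) \<in> measurable M (count_space UNIV)"
proof -
  have "(\<lambda>\<omega>. map (\<lambda>i. X i \<omega>) [0..<m]) -` {l} \<inter> space M = (if length l = m then history M X l else {})" for l
    by (auto simp: history_def)
  then show ?thesis
    by (simp add: measurable_count_space_eq2_countable history_in_events)
qed

lemma prob_history:
  assumes "length l = Suc n"
  shows "prob (history M X l) = path_prob a b (nth l) n"
proof -
  have "history M X l = {\<omega> \<in> space M. \<forall>i\<le>n. X i \<omega> = l ! i}"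
    using assms by (simp add: history_eq_nth less_Suc_eq_le)
  then show ?thesis
    using walk by (simp add: is_walk_def)
qed

lemma prob_history_snoc:
  assumes "length l = Suc n"
  shows "prob (history M X (l @ [v])) = prob (history M X l) * step_prob a b (nth (l @ [v])) n"
  using assms prob_history[of "l @ [v]" "Suc n"] prob_history[of l n] by (simp add: path_prob_snoc)

lemma prob_history_diff_snoc:
  assumes "length l = Suc n"
  shows "prob (history M X l - history M X (l @ [v]))
    = prob (history M X l) * (1 - step_prob a b (nth (l @ [v])) n)"
proof -
  have "prob (history M X l - history M X (l @ [v])) = prob (history M X l) - prob (history M X (l @ [v]))"
    using history_in_events by (intro finite_measure_Diff) (auto simp: history_snoc)
  then show ?thesis
    using assms by (simp add: prob_history_snoc algebra_simps)
qed

lemma prob_history_diff_step_le: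
  assumes "length l = Suc n" and "s = 1 \<or> s = - 1" and "b \<ge> 0"
    and "eps * n \<le> s * Delta a (nth l) n (l ! n)"
  shows "prob (history M X l - history M X (l @ [l ! n + s])) \<le> exp (- (2 * b * eps * n)) * prob (history M X l)"
proof -
  define y where "y = real_of_int s * b * Delta a (nth l) n (l ! n)"
  have "prob (history M X l - history M X (l @ [l ! n + s]))
      = prob (history M X l) * (1 - exp y / (exp y + exp (- y)))"
    using assms(1,2) by (simp add: prob_history_diff_snoc step_prob_snoc y_def)
  also have "\<dots> \<le> prob (history M X l) * exp (- 2 * y)"
    by (intro mult_left_mono one_minus_exp_ratio_le) simp
  also have "\<dots> \<le> prob (history M X l) * exp (- (2 * b * eps * n))"
  proof (intro mult_left_mono)
    show "exp (- 2 * y) \<le> exp (- (2 * b * eps * n))"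
      using mult_left_mono[OF assms(4) assms(3)] by (simp add: y_def algebra_simps)
  qed simp
  finally show ?thesis
    by (simp add: mult.commute)
qed

lemma prob_history_diff_both_steps:
  assumes "length l = Suc n"
  shows "prob (history M X l - history M X (l @ [l ! n + 1]) - history M X (l @ [l ! n - 1])) = 0"
proof -
  define y where "y = b * Delta a (nth l) n (l ! n)"
  have up: "step_prob a b (nth (l @ [l ! n + 1])) n = exp y / (exp y + exp (- y))"
    using step_prob_snoc[OF assms, where s = 1] by (simp add: y_def)
  have down: "step_prob a b (nth (l @ [l ! n - 1])) n = exp (- y) / (exp (- y) + exp y)"
    using step_prob_snoc[OF assms, where s = "- 1"] by (simp add: y_def)
  have "history M X (l @ [l ! n - 1]) \<subseteq> history M X l - history M X (l @ [l ! n + 1])"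
    by (auto simp: history_snoc)
  then have "prob (history M X l - history M X (l @ [l ! n + 1]) - history M X (l @ [l ! n - 1]))
      = prob (history M X l - history M X (l @ [l ! n + 1])) - prob (history M X (l @ [l ! n - 1]))"
    using history_in_events by (intro finite_measure_Diff) auto
  also have "\<dots> = prob (history M X l) * (1 - exp y / (exp y + exp (- y)) - exp (- y) / (exp (- y) + exp y))"
    using assms by (simp add: prob_history_diff_snoc prob_history_snoc up down right_diff_distrib)
  also have "\<dots> = 0"
    by (simp add: exp_ratio_compl add.commute)
  finally show ?thesis .
qed

lemma prob_drift_violation_history_le:
  assumes "length l = Suc n" and "b > 0" and "eps > 0"
  shows "prob (drift_violation M X a eps n \<inter> history M X l)
    \<le> exp (- (2 * b * eps * n)) * prob (history M X l)"
proof -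
  define x where "x = l ! n"
  define d where "d = Delta a (nth l) n x"
  let ?H = "history M X l" and ?Hs = "\<lambda>v. history M X (l @ [v])"
  define W where "W = drift_violation M X a eps n \<inter> ?H"
  have obeys_iff: "obeys_drift a eps (\<lambda>i. X i \<omega>) n \<longleftrightarrow>
      (eps \<le> d / n \<longrightarrow> v = x + 1) \<and> (d / n \<le> - eps \<longrightarrow> v = x - 1) \<and> (v = x + 1 \<or> v = x - 1)"
    if "\<omega> \<in> ?H" "v = X (Suc n) \<omega>" for \<omega> v
  proof -
    have "\<forall>i<Suc n. X i \<omega> = l ! i"
      using that(1) assms(1) unfolding history_eq_nth by auto
    then have "\<forall>i\<le>Suc n. X i \<omega> = (l @ [v]) ! i"
      using that(2) assms(1) by (auto simp: nth_append le_Suc_eq less_Suc_eq_le)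
    then have "obeys_drift a eps (\<lambda>i. X i \<omega>) n \<longleftrightarrow> obeys_drift a eps (nth (l @ [v])) n"
      by (rule obeys_drift_cong)
    then show ?thesis
      unfolding obeys_drift_snoc[OF assms(1)] x_def d_def .
  qed
  have W_iff: "\<omega> \<in> W \<longleftrightarrow> \<omega> \<in> ?H \<and> \<not> ((eps \<le> d / n \<longrightarrow> X (Suc n) \<omega> = x + 1) \<and>
      (d / n \<le> - eps \<longrightarrow> X (Suc n) \<omega> = x - 1) \<and> (X (Suc n) \<omega> = x + 1 \<or> X (Suc n) \<omega> = x - 1))" for \<omega>
    using obeys_iff[OF _ refl, of \<omega>] by (auto simp: W_def drift_violation_def dest: history_in_space)
  have Hs_iff: "\<omega> \<in> ?Hs v \<longleftrightarrow> \<omega> \<in> ?H \<and> X (Suc n) \<omega> = v" for \<omega> v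
    using assms(1) by (auto simp: history_snoc dest: history_in_space)
  consider (up) "eps \<le> d / n" | (down) "d / n \<le> - eps" | (neither) "- eps < d / n" "d / n < eps"
    by linarith
  then have "prob W \<le> exp (- (2 * b * eps * n)) * prob ?H"
  proof cases
    case up
    then have "W \<subseteq> ?H - ?Hs (x + 1)"
      using \<open>eps > 0\<close> by (auto simp: W_iff Hs_iff)
    then have "prob W \<le> prob (?H - ?Hs (x + 1))"
      using history_in_events by (intro finite_measure_mono) auto
    also have "\<dots> \<le> exp (- (2 * b * eps * n)) * prob ?H"
      using up \<open>eps > 0\<close> \<open>b > 0\<close> prob_history_diff_step_le[OF assms(1), of 1 eps]
      by (simp add: x_def d_def mult_le_of_le_divide)
    finally show ?thesis .
  next
    case down
    then have "W \<subseteq> ?H - ?Hs (x - 1)"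
      using \<open>eps > 0\<close> by (auto simp: W_iff Hs_iff)
    then have "prob W \<le> prob (?H - ?Hs (x - 1))"
      using history_in_events by (intro finite_measure_mono) auto
    also have "\<dots> \<le> exp (- (2 * b * eps * n)) * prob ?H"
      using down \<open>eps > 0\<close> \<open>b > 0\<close> prob_history_diff_step_le[OF assms(1), of "- 1" eps]
      by (simp add: x_def d_def mult_le_of_le_divide)
    finally show ?thesis .
  next
    case neither
    then have "W \<subseteq> ?H - ?Hs (x + 1) - ?Hs (x - 1)"
      by (auto simp: W_iff Hs_iff)
    then have "prob W \<le> prob (?H - ?Hs (x + 1) - ?Hs (x - 1))"
      using history_in_events by (intro finite_measure_mono) auto
    also have "\<dots> = 0"
      using prob_history_diff_both_steps[OF assms(1)] by (simp add: x_def)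
    finally show ?thesis
      by (simp add: order_trans)
  qed
  then show ?thesis
    by (simp only: W_def)
qed

lemma drift_violation_in_events: "drift_violation M X a eps n \<in> events"
proof -
  let ?prefix = "\<lambda>\<omega>. map (\<lambda>i. X i \<omega>) [0..<Suc (Suc n)]"
  have "obeys_drift a eps (\<lambda>i. X i \<omega>) n \<longleftrightarrow> obeys_drift a eps (nth (?prefix \<omega>)) n" for \<omega>
    by (intro obeys_drift_cong) (auto simp del: upt_Suc)
  then have "drift_violation M X a eps n = ?prefix -` {l. \<not> obeys_drift a eps (nth l) n} \<inter> space M"
    by (auto simp: drift_violation_def)
  also have "\<dots> \<in> events"
    by (rule measurable_sets[OF measurable_walk_prefix]) simp
  finally show ?thesis .
qed

lemma prob_drift_violation_le:
  assumes "b > 0" and "eps > 0"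
  shows "prob (drift_violation M X a eps n) \<le> exp (- (2 * b * eps * n))"
proof (rule prob_le_of_partition[where I = "{l. length l = Suc n}" and H = "history M X"])
  show "countable {l :: int list. length l = Suc n}"
    by (rule countableI_type)
  show "drift_violation M X a eps n \<subseteq> (\<Union>l\<in>{l. length l = Suc n}. history M X l)"
    by (rule subset_trans[OF _ history_cover]) (auto simp: drift_violation_def)
  show "prob (drift_violation M X a eps n \<inter> history M X l)
      \<le> exp (- (2 * b * eps * n)) * prob (history M X l)" if "l \<in> {l. length l = Suc n}" for l
    using that assms by (simp add: prob_drift_violation_history_le)
qed (simp_all add: history_disjoint history_in_events drift_violation_in_events)

lemma AE_eventually_obeys_drift:
  assumes "b > 0" and "eps > 0"
  shows "AE \<omega> in M. \<exists>N. \<forall>n\<ge>N. obeys_drift a eps (\<lambda>i. X i \<omega>) n"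
proof -
  let ?W = "drift_violation M X a eps"
  have "summable (\<lambda>n. prob (?W n))"
  proof (rule summable_comparison_test)
    have "exp (- (2 * b * eps * n)) = exp (- (2 * b * eps)) ^ n" for n :: nat
      using exp_of_nat_mult[of n "- (2 * b * eps)"] by (simp add: algebra_simps)
    then show "\<exists>N. \<forall>n\<ge>N. norm (prob (?W n)) \<le> exp (- (2 * b * eps)) ^ n"
      using prob_drift_violation_le[OF assms] by simp
    show "summable (\<lambda>n. exp (- (2 * b * eps)) ^ n)"
      using assms by (intro summable_geometric) simp
  qed
  then have "AE \<omega> in M. eventually (\<lambda>n. \<omega> \<in> space M - ?W n) sequentially"
    using drift_violation_in_events by (intro borel_cantelli_AE1) (auto simp: emeasure_eq_measure)
  then show ?thesis
    by (rule eventually_mono) (auto simp: eventually_sequentially drift_violation_def)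
qed

end

theorem mainTheorem12:
  fixes M :: "'w measure" and X :: "nat \<Rightarrow> 'w \<Rightarrow> int" and \<alpha> \<beta> \<epsilon> :: real
  assumes "\<alpha> > 1/3" and "\<beta> > 0" and "\<epsilon> > 0"
    and "is_walk M \<alpha> \<beta> X"
  shows "AE \<omega> in M.
    (\<exists>N1::nat. \<forall>k\<ge>N1. \<forall>j::int. X k \<omega> = j \<longrightarrow>
        (Delta \<alpha> (\<lambda>i. X i \<omega>) k j / real k \<ge> \<epsilon> \<longrightarrow> X (Suc k) \<omega> = j + 1) \<and>
        (Delta \<alpha> (\<lambda>i. X i \<omega>) k j / real k \<le> - \<epsilon> \<longrightarrow> X (Suc k) \<omega> = j - 1)) \<and>
    (\<exists>N2::nat. \<forall>k\<ge>N2. \<forall>j::int.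
        (X k \<omega> < j \<longrightarrow> Delta \<alpha> (\<lambda>i. X i \<omega>) k j / real k < 3 * \<epsilon> / 2) \<and>
        (X k \<omega> > j \<longrightarrow> Delta \<alpha> (\<lambda>i. X i \<omega>) k j / real k > - (3 * \<epsilon> / 2)))"
proof -
  have "AE \<omega> in M. \<exists>N. \<forall>n\<ge>N. obeys_drift \<alpha> \<epsilon> (\<lambda>i. X i \<omega>) n"
    using assms(4,2,3) by (rule AE_eventually_obeys_drift)
  moreover have "\<alpha> \<ge> 0"
    \<comment> \<open>this is all that is needed of \<open>\<alpha> > 1/3\<close>\<close>
    using assms(1) by simp
  ultimately show ?thesis
    by (elim eventually_mono) (use drift_bounds_of_obeys_drift assms(3) in blast)
qed

end
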